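(* If $A\in\mathbb{R}^{n\times n}$ is almost semimonotone, then $A$ is not a Karamardian matrix.
   Context: $A$ is semimonotone if for every $x$ with $0\ne x\ge 0$ there is an index $k$ with $x_k>0$ and $(Ax)_k\ge 0$. $A$ is almost semimonotone if every proper principal submatrix of $A$ is semimonotone but $A$ itself is not semimonotone. For $M\in\mathbb{R}^{n\times n}$ let $K_M=\mathbb{R}^n_+\cap R(M)$ and $K_M^*=\{y: x^Ty\ge 0\ \forall x\in K_M\}$ (one has $K_M^*=\mathbb{R}^n_++N(M^T)$, with interior $\{a+b: a>0,\ b\in N(M^T)\}$). For $q$, LCP$(M,K_M,q)$ is to find $x\in K_M$ with $Mx+q\in K_M^*$ and $x^T(Mx+q)=0$. $M$ is a Karamardian matrix if $K_M\ne\{0\}$ and there exists $d$ in the interior of $K_M^*$ such that both LCP$(M,K_M,0)$ and LCP$(M,K_M,d)$ have $x=0$ as their only solution. *)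

theory Defs
  imports "HOL-Analysis.Analysis"
begin

definition nonneg :: "real^'n \<Rightarrow> bool" where
  "nonneg x \<longleftrightarrow> (\<forall>i. 0 \<le> x $ i)"

(* The principal submatrix A[I] is semimonotone: for every x \<ge> 0, x \<noteq> 0,
   supported on I (i.e. a nonzero nonnegative vector of R^I), there is k \<in> I
   with x_k > 0 and (A[I] x)_k = (\<Sum>j\<in>I. A_kj x_j) \<ge> 0. *)
definition semimonotone_on :: "'n::finite set \<Rightarrow> real^'n^'n \<Rightarrow> bool" where
  "semimonotone_on I A \<longleftrightarrow>
     (\<forall>x::real^'n. nonneg x \<and> x \<noteq> 0 \<and> (\<forall>i. i \<notin> I \<longrightarrow> x $ i = 0) \<longrightarrow>
        (\<exists>k\<in>I. x $ k > 0 \<and> (\<Sum>j\<in>I. A $ k $ j * x $ j) \<ge> 0))"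

definition semimonotone :: "real^'n::finite^'n \<Rightarrow> bool" where
  "semimonotone A \<longleftrightarrow>
     (\<forall>x::real^'n. nonneg x \<and> x \<noteq> 0 \<longrightarrow> (\<exists>k. x $ k > 0 \<and> (A *v x) $ k \<ge> 0))"

definition almost_semimonotone :: "real^'n::finite^'n \<Rightarrow> bool" where
  "almost_semimonotone A \<longleftrightarrow>
     (\<forall>I. I \<noteq> {} \<and> I \<subset> UNIV \<longrightarrow> semimonotone_on I A) \<and> \<not> semimonotone A"

definition KM :: "real^'n::finite^'n \<Rightarrow> (real^'n) set" where
  "KM M = {x. nonneg x} \<inter> range (\<lambda>y. M *v y)"

definition dual_cone :: "(real^'n::finite) set \<Rightarrow> (real^'n) set" where
  "dual_cone K = {y. \<forall>x\<in>K. 0 \<le> x \<bullet> y}"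

definition LCP_sol :: "real^'n::finite^'n \<Rightarrow> (real^'n) set \<Rightarrow> real^'n \<Rightarrow> (real^'n) set" where
  "LCP_sol M K q = {x. x \<in> K \<and> M *v x + q \<in> dual_cone K \<and> x \<bullet> (M *v x + q) = 0}"

definition karamardian :: "real^'n::finite^'n \<Rightarrow> bool" where
  "karamardian M \<longleftrightarrow> KM M \<noteq> {0} \<and>
     (\<exists>d\<in>interior (dual_cone (KM M)).
        LCP_sol M (KM M) 0 = {0} \<and> LCP_sol M (KM M) d = {0})"

end

theory Submission
  imports Defs
begin

text \<open>
  A vector u \<ge> 0, u \<noteq> 0 witnessing that A is not semimonotone must have full support,
  since on its support it would otherwise witness that a proper principal submatrix is not
  semimonotone. Hence there is x > 0 with Ax < 0. If A v \<le> 0 but some v_i < 0, then moving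
  from x along v up to the first coordinate that vanishes yields another witness with a zero
  coordinate; so A v \<le> 0 forces v \<ge> 0. Consequently A is invertible, K_A is the whole
  nonnegative orthant, and for any d in the interior of its dual cone (so d \<ge> 0, d \<noteq> 0)
  the vector z with A z = -d is a nonzero solution of LCP(A, K_A, d).
\<close>

lemma not_semimonotoneE:
  fixes A :: "real^'n::finite^'n"
  assumes "\<not> semimonotone A"
  obtains u where "nonneg u" "u \<noteq> 0" "\<And>k. u $ k > 0 \<Longrightarrow> (A *v u) $ k < 0"
  using assms that unfolding semimonotone_def by (meson not_le)

lemma almost_semimonotone_witness_pos:
  fixes A :: "real^'n::finite^'n"
  assumes A: "almost_semimonotone A"
    and u: "nonneg u" "u \<noteq> 0" "\<And>k. u $ k > 0 \<Longrightarrow> (A *v u) $ k < 0"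
  shows "u $ i > 0"
proof (rule ccontr)
  assume not_pos: "\<not> u $ i > 0"
  define I where "I = {j. u $ j > 0}"
  have outside: "u $ j = 0" if "j \<notin> I" for j
    using u(1) that unfolding I_def nonneg_def by (metis less_eq_real_def mem_Collect_eq)
  have "I \<noteq> {}"
  proof
    assume "I = {}"
    then have "u = 0" using outside by (simp add: vec_eq_iff)
    with u(2) show False by simp
  qed
  moreover have "I \<subset> UNIV" using not_pos I_def by auto
  ultimately have "semimonotone_on I A"
    using A unfolding almost_semimonotone_def by blast
  then obtain k where k: "k \<in> I" "u $ k > 0" "(\<Sum>j\<in>I. A $ k $ j * u $ j) \<ge> 0"
    using u outside unfolding semimonotone_on_def by blast
  have "(A *v u) $ k = (\<Sum>j\<in>UNIV. A $ k $ j * u $ j)"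
    by (simp add: matrix_vector_mult_def)
  also have "\<dots> = (\<Sum>j\<in>I. A $ k $ j * u $ j)"
    by (rule sum.mono_neutral_right) (auto simp: outside)
  finally show False using k u(3)[OF k(2)] by simp
qed

lemma almost_semimonotone_pos_witness:
  fixes A :: "real^'n::finite^'n"
  assumes "almost_semimonotone A"
  obtains x where "\<And>i. x $ i > 0" "\<And>i. (A *v x) $ i < 0"
proof -
  have "\<not> semimonotone A" using assms unfolding almost_semimonotone_def by blast
  then obtain u where u: "nonneg u" "u \<noteq> 0" "\<And>k. u $ k > 0 \<Longrightarrow> (A *v u) $ k < 0"
    using not_semimonotoneE by blast
  have "u $ i > 0" for i by (rule almost_semimonotone_witness_pos[OF assms u])
  with u(3) show ?thesis using that by blast
qed

lemma almost_semimonotone_nonpos_image_imp_nonneg: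
  fixes A :: "real^'n::finite^'n"
  assumes A: "almost_semimonotone A"
    and v: "\<And>i. (A *v v) $ i \<le> 0"
  shows "nonneg v"
proof (rule ccontr)
  obtain x where x: "\<And>i. x $ i > 0" "\<And>i. (A *v x) $ i < 0"
    using almost_semimonotone_pos_witness[OF A] by blast
  assume "\<not> nonneg v"
  define S where "S = {i. v $ i < 0}"
  have S: "S \<noteq> {}" "finite S"
    using \<open>\<not> nonneg v\<close> unfolding S_def nonneg_def by (auto simp: not_le)
  define s where "s = Min ((\<lambda>i. x $ i / - v $ i) ` S)"
  have "s \<in> (\<lambda>i. x $ i / - v $ i) ` S"
    unfolding s_def using S by (intro Min_in) auto
  then obtain j where j: "j \<in> S" "s = x $ j / - v $ j" by blast
  have s_le: "s \<le> x $ i / - v $ i" if "i \<in> S" for i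
    using S that unfolding s_def by auto
  have s_pos: "s > 0" using j x(1)[of j] S_def by (auto simp: divide_pos_neg)
  define u where "u = x + s *\<^sub>R v"
  have u_nonneg: "u $ i \<ge> 0" for i
  proof (cases "i \<in> S")
    case True
    then have "v $ i < 0" by (simp add: S_def)
    with s_le[OF True] have "s * - v $ i \<le> x $ i" by (simp add: field_simps)
    then show ?thesis by (simp add: u_def algebra_simps)
  next
    case False
    then show ?thesis using x(1)[of i] s_pos by (simp add: u_def S_def)
  qed
  have u_j: "u $ j = 0" using j S_def by (simp add: u_def field_simps)
  have Au: "(A *v u) $ i < 0" for i
  proof -
    have "(A *v u) $ i = (A *v x) $ i + s * (A *v v) $ i"
      by (simp add: u_def matrix_vector_right_distrib matrix_vector_mult_scaleR)
    moreover have "s * (A *v v) $ i \<le> 0" using s_pos v[of i] by (simp add: mult_nonneg_nonpos)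
    ultimately show ?thesis using x(2)[of i] by linarith
  qed
  have "u \<noteq> 0" using Au[of j] by auto
  then have "u $ j > 0"
    using almost_semimonotone_witness_pos[OF A, of u j] u_nonneg Au by (auto simp: nonneg_def)
  with u_j show False by simp
qed

lemma almost_semimonotone_surj:
  fixes A :: "real^'n::finite^'n"
  assumes A: "almost_semimonotone A"
  shows "surj ((*v) A)"
proof -
  have "v = 0" if Av: "A *v v = 0" for v
  proof -
    have "nonneg v" "nonneg (- v)"
      using almost_semimonotone_nonpos_image_imp_nonneg[OF A]
      by (simp_all add: Av linear_neg[OF matrix_vector_mul_linear])
    then show ?thesis unfolding nonneg_def by (simp add: vec_eq_iff) (meson antisym neg_0_le_iff_le)
  qed
  then have "inj ((*v) A)"
    using linear_injective_0[OF matrix_vector_mul_linear] by blast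
  then show ?thesis by (simp add: linear_injective_imp_surjective)
qed

lemma KM_surj: "surj ((*v) M) \<Longrightarrow> KM M = {x. nonneg x}"
  unfolding KM_def by auto

lemma dual_cone_orthant_nonneg:
  assumes "d \<in> dual_cone {x::real^'n::finite. nonneg x}"
  shows "nonneg d"
  unfolding nonneg_def
proof
  fix i
  have "axis i 1 \<in> {x::real^'n. nonneg x}" by (simp add: nonneg_def axis_def)
  with assms have "0 \<le> axis i 1 \<bullet> d" unfolding dual_cone_def by blast
  then show "0 \<le> d $ i" by (simp add: inner_axis')
qed

lemma zero_notin_interior_dual_cone:
  fixes K :: "(real^'n::finite) set"
  assumes "x \<in> K" "x \<noteq> 0"
  shows "0 \<notin> interior (dual_cone K)"
proof
  assume "0 \<in> interior (dual_cone K)"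
  then obtain e where e: "e > 0" "ball 0 e \<subseteq> dual_cone K"
    using mem_interior by blast
  define y where "y = - (e / (2 * norm x)) *\<^sub>R x"
  have "norm y = e / 2" using assms(2) e(1) by (simp add: y_def)
  with e have "y \<in> dual_cone K" by auto
  with assms(1) have "0 \<le> x \<bullet> y" unfolding dual_cone_def by blast
  moreover have "x \<bullet> y = - (e / (2 * norm x)) * (x \<bullet> x)" by (simp add: y_def)
  moreover have "e / (2 * norm x) * (x \<bullet> x) > 0" using assms(2) e(1) by simp
  ultimately show False by linarith
qed

theorem mainTheorem15:
  fixes A :: "real^'n::finite^'n"
  assumes "almost_semimonotone A"
  shows "\<not> karamardian A"
proof
  assume "karamardian A"
  then obtain d where d: "d \<in> interior (dual_cone (KM A))" "LCP_sol A (KM A) d = {0}"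
    unfolding karamardian_def by blast
  have surj: "surj ((*v) A)" by (rule almost_semimonotone_surj[OF assms])
  then have K: "KM A = {x. nonneg x}" by (rule KM_surj)
  have "nonneg d" using d(1) interior_subset unfolding K by (blast intro: dual_cone_orthant_nonneg)
  have "axis i 1 \<in> KM A" for i unfolding K by (simp add: nonneg_def axis_def)
  then have "d \<noteq> 0"
    using d(1) zero_notin_interior_dual_cone[of "axis undefined 1"] by (auto simp: axis_eq_0_iff)
  obtain z where z: "A *v z = - d" using surj by (metis surjE)
  have "nonneg z"
    using \<open>nonneg d\<close> by (intro almost_semimonotone_nonpos_image_imp_nonneg[OF assms])
      (simp add: z nonneg_def)
  then have "z \<in> LCP_sol A (KM A) d"
    unfolding LCP_sol_def dual_cone_def K by (simp add: z)
  moreover have "z \<noteq> 0" using z \<open>d \<noteq> 0\<close> by auto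
  ultimately show False using d(2) by blast
qed

end
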